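(* Let $(M,\eta)$ be a set operad, $\mathcal A$ a commutative $\mathbb K$-algebra, and $\omega_1,\omega_2:\mathcal N_M\to\mathcal A$ algebra homomorphisms. Then, as formal power series with coefficients in $\mathcal A$, $$M^{\omega_1}\big(M^{\omega_2}(x)\big)=M^{\omega_2\ast\omega_1}(x).$$
   Context: $\mathcal N_M$ is the natural Hopf algebra of the set operad $M$. As an algebra it is $\mathbb K[t_\alpha:\alpha\text{ a type of }M\text{-structures}]$ with $t_\bullet=1$ ($\bullet$ the type of singleton structures). Its coproduct is multiplicative with $\Delta(t_{\tau(m)})=\sum_{(a,m')\in M(M)[U],\ \eta(a,m')=m}t_{\tau(a)}\otimes t_{\tau(m')}$, where $t_{\tau(a)}=\prod_{B\in\pi}t_{\tau(m_B)}$ for an assembly $a=\{m_B\}_{B\in\pi}$. An algebra homomorphism $\omega:\mathcal N_M\to\mathcal A$ is called a weight. For $[n]=\{1,\dots,n\}$ set $|M[n]|_\omega=\sum_{m\in M[[n]]}\omega(t_{\tau(m)})$, and define $M^\omega(x)=x+\sum_{n\ge2}|M[n]|_\omega\,\frac{x^n}{n!}$. The convolution is $\omega_1\ast\omega_2=\mu\circ(\omega_1\otimes\omega_2)\circ\Delta$, with $\mu$ the multiplication of $\mathcal A$. *)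

theory Defs
  imports "HOL-Library.Disjoint_Sets" "HOL-Computational_Algebra.Formal_Power_Series"
begin

(* An M-structure on U is an element
   m \<in> M U; transport along a bijection sigma : U -> V is  rl sigma m \<in> M V.
   A structure on a partition pi (a set of blocks) is encoded, via the canonical
   bijection B \<mapsto> Min B, as a structure on the label set  Min ` pi. *)

(* M(M)[U]: a partition pi of U, an assembly f (f B \<in> M B for blocks B, undefined
   elsewhere), and an M-structure m' on the set of blocks (encoded on Min ` pi). *)
definition comp_structs ::
  "(nat set \<Rightarrow> 's set) \<Rightarrow> nat set \<Rightarrow> (nat set set \<times> (nat set \<Rightarrow> 's) \<times> 's) set" where
  "comp_structs M U = {(\<pi>, f, m'). partition_on U \<pi> \<and> (\<forall>B\<in>\<pi>. f B \<in> M B)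
       \<and> (\<forall>B. B \<notin> \<pi> \<longrightarrow> f B = undefined) \<and> m' \<in> M (Min ` \<pi>)}"

definition block_relabel :: "(nat \<Rightarrow> nat) \<Rightarrow> nat set set \<Rightarrow> nat \<Rightarrow> nat" where
  "block_relabel \<sigma> \<pi> i = Min (\<sigma> ` (THE B. B \<in> \<pi> \<and> Min B = i))"

(* for associativity: rho a partition of the (encoded) block set Min ` pi *)
definition merge_part :: "nat set set \<Rightarrow> nat set set \<Rightarrow> nat set set" where
  "merge_part \<pi> \<rho> = (\<lambda>D. \<Union>{B\<in>\<pi>. Min B \<in> D}) ` \<rho>"

locale set_operad =
  fixes M :: "nat set \<Rightarrow> 's set"
    and rl :: "(nat \<Rightarrow> nat) \<Rightarrow> 's \<Rightarrow> 's"
    and eta :: "nat set set \<Rightarrow> (nat set \<Rightarrow> 's) \<Rightarrow> 's \<Rightarrow> 's"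
    and e :: "nat \<Rightarrow> 's"
  assumes finite_M: "finite U \<Longrightarrow> finite (M U)"
    and rl_closed: "finite U \<Longrightarrow> bij_betw \<sigma> U V \<Longrightarrow> m \<in> M U \<Longrightarrow> rl \<sigma> m \<in> M V"
    and rl_local: "m \<in> M U \<Longrightarrow> (\<forall>x\<in>U. \<sigma> x = \<sigma>' x) \<Longrightarrow> rl \<sigma> m = rl \<sigma>' m"
    and rl_id: "m \<in> M U \<Longrightarrow> rl id m = m"
    and rl_comp: "finite U \<Longrightarrow> bij_betw \<sigma> U V \<Longrightarrow> bij_betw \<tau> V W \<Longrightarrow> m \<in> M U
                  \<Longrightarrow> rl (\<tau> \<circ> \<sigma>) m = rl \<tau> (rl \<sigma> m)"
    and M_empty: "M {} = {}"
    and M_singleton: "M {u} = {e u}"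
    and eta_closed: "finite U \<Longrightarrow> (\<pi>, f, m') \<in> comp_structs M U \<Longrightarrow> eta \<pi> f m' \<in> M U"
    and eta_equivariant: "finite U \<Longrightarrow> bij_betw \<sigma> U V \<Longrightarrow> (\<pi>, f, m') \<in> comp_structs M U \<Longrightarrow>
         rl \<sigma> (eta \<pi> f m') =
         eta (image \<sigma> ` \<pi>)
             (\<lambda>B'. if B' \<in> image \<sigma> ` \<pi> then rl \<sigma> (f (inv_into U \<sigma> ` B')) else undefined)
             (rl (block_relabel \<sigma> \<pi>) m')"
    and unit_left: "finite U \<Longrightarrow> m \<in> M U \<Longrightarrow>
         eta ((\<lambda>u. {u}) ` U) (\<lambda>B. if B \<in> (\<lambda>u. {u}) ` U then e (Min B) else undefined) m = m"
    and unit_right: "finite U \<Longrightarrow> m \<in> M U \<Longrightarrow>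
         eta {U} (\<lambda>B. if B = U then m else undefined) (e (Min U)) = m"
    and assoc: "finite U \<Longrightarrow> partition_on U \<pi> \<Longrightarrow> (\<forall>B\<in>\<pi>. f B \<in> M B) \<Longrightarrow>
         (\<forall>B. B \<notin> \<pi> \<longrightarrow> f B = undefined) \<Longrightarrow> (\<rho>, g, m) \<in> comp_structs M (Min ` \<pi>) \<Longrightarrow>
         eta \<pi> f (eta \<rho> g m) =
         eta (merge_part \<pi> \<rho>)
             (\<lambda>V. if V \<in> merge_part \<pi> \<rho>
                   then eta {B\<in>\<pi>. B \<subseteq> V} (\<lambda>B. if B \<in> \<pi> \<and> B \<subseteq> V then f B else undefined)
                            (g (Min ` {B\<in>\<pi>. B \<subseteq> V}))
                   else undefined)
             m"

(* the type (isomorphism class) of the M-structure m on U *)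
definition otype :: "((nat \<Rightarrow> nat) \<Rightarrow> 's \<Rightarrow> 's) \<Rightarrow> nat set \<Rightarrow> 's \<Rightarrow> (nat set \<times> 's) set" where
  "otype rl U m = {(V, rl \<sigma> m) | V \<sigma>. finite V \<and> bij_betw \<sigma> U V}"

(* A weight N_M -> A is an algebra homomorphism of the polynomial algebra
   K[t_alpha] with t_bullet = 1; it is given by its values on the generators t_alpha,
   i.e. a function on types, which must send the singleton type to 1. *)
definition weight :: "((nat \<Rightarrow> nat) \<Rightarrow> 's \<Rightarrow> 's) \<Rightarrow> (nat \<Rightarrow> 's) \<Rightarrow> ((nat set \<times> 's) set \<Rightarrow> 'a::comm_ring_1) \<Rightarrow> bool" where
  "weight rl e \<omega> \<longleftrightarrow> (\<forall>u. \<omega> (otype rl {u} (e u)) = 1)"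

(* (omega2 * omega1)(t_{tau(m)}) for m \<in> M[U], computed from the coproduct formula:
   sum over (a, m') \<in> M(M)[U] with eta(a, m') = m of omega2(t_{tau(a)}) * omega1(t_{tau(m')}) *)
definition conv_val ::
  "(nat set \<Rightarrow> 's set) \<Rightarrow> ((nat \<Rightarrow> nat) \<Rightarrow> 's \<Rightarrow> 's) \<Rightarrow> (nat set set \<Rightarrow> (nat set \<Rightarrow> 's) \<Rightarrow> 's \<Rightarrow> 's)
   \<Rightarrow> ((nat set \<times> 's) set \<Rightarrow> 'a::comm_ring_1) \<Rightarrow> ((nat set \<times> 's) set \<Rightarrow> 'a) \<Rightarrow> nat set \<Rightarrow> 's \<Rightarrow> 'a" where
  "conv_val M rl eta \<omega>2 \<omega>1 U m =
     (\<Sum>(\<pi>, f, m') \<in> {(\<pi>, f, m') \<in> comp_structs M U. eta \<pi> f m' = m}.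
        (\<Prod>B\<in>\<pi>. \<omega>2 (otype rl B (f B))) * \<omega>1 (otype rl (Min ` \<pi>) m'))"

definition wcard :: "(nat set \<Rightarrow> 's set) \<Rightarrow> (nat set \<Rightarrow> 's \<Rightarrow> 'a::comm_ring_1) \<Rightarrow> nat \<Rightarrow> 'a" where
  "wcard M val n = (\<Sum>m\<in>M {1..n}. val {1..n} m)"

(* A commutative K-algebra A: a commutative ring with structure ring homomorphism K -> A *)
definition K_algebra_map :: "('k::field_char_0 \<Rightarrow> 'a::comm_ring_1) \<Rightarrow> bool" where
  "K_algebra_map \<phi> \<longleftrightarrow> \<phi> 1 = 1 \<and> (\<forall>x y. \<phi> (x + y) = \<phi> x + \<phi> y) \<and> (\<forall>x y. \<phi> (x * y) = \<phi> x * \<phi> y)"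

definition egf :: "('k::field_char_0 \<Rightarrow> 'a::comm_ring_1) \<Rightarrow> (nat set \<Rightarrow> 's set)
                   \<Rightarrow> (nat set \<Rightarrow> 's \<Rightarrow> 'a) \<Rightarrow> 'a fps" where
  "egf \<phi> M val = Abs_fps (\<lambda>n. if n = 0 then 0 else if n = 1 then 1
                               else wcard M val n * \<phi> (inverse (fact n)))"

end

theory Submission
  imports Defs
begin

(*
  Summing the coproduct formula for the convolution over all m in M[n] removes the constraint
  eta(a, m') = m, so |M[n]| for the weight omega2 * omega1 becomes a sum over all of M(M)[n]:
  over the partitions pi of [n], an M-structure on each block and one on the set of blocks.
  Transport makes each factor depend only on sizes, giving
  sum_pi |M[#pi]|_omega1 * prod_{B in pi} |M[#B]|_omega2.  This is the coefficient of x^n/n! in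
  the composite M^omega1(M^omega2(x)): the coefficient of x^n/n! in B(x)^k counts sequences of k
  disjoint blocks covering [n], i.e. k! times the partitions of [n] into k blocks.
*)

unbundle fps_syntax

lemma partition_on_Diff_block:
  assumes "partition_on U P" "S \<in> P"
  shows "partition_on (U - S) (P - {S})"
proof -
  have "disjnt S (\<Union>(P - {S}))"
    using partition_onD2[OF assms(1)] assms(2) by (auto simp: disjnt_def disjoint_def)
  moreover have "insert S (P - {S}) = P" using assms(2) by auto
  ultimately show ?thesis using partition_on_insert[of S "P - {S}" U] assms(1) by simp
qed

lemma partition_on_insert_block:
  assumes "partition_on (U - S) P" "S \<subseteq> U" "S \<noteq> {}"
  shows "partition_on U (insert S P)" "S \<notin> P"
proof -
  have "disjnt S (\<Union>P)" using partition_onD1[OF assms(1)] by (auto simp: disjnt_def)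
  then show "partition_on U (insert S P)" using partition_on_insert[of S P U] assms by simp
  show "S \<notin> P" using partition_onD1[OF assms(1)] assms(3) by auto
qed

lemma partition_on_singleton_iff: "partition_on {x} P \<longleftrightarrow> P = {{x}}"
proof
  assume P: "partition_on {x} P"
  have "B = {x}" if "B \<in> P" for B
    using partition_onD1[OF P] partition_onD3[OF P] that by (metis Union_upper subset_singleton_iff)
  moreover have "P \<noteq> {}" using partition_onD1[OF P] by auto
  ultimately show "P = {{x}}" by blast
qed (simp add: partition_on_space)

lemma partition_on_inj_on_Min:
  fixes U :: "'a::linorder set"
  assumes "finite U" "partition_on U P"
  shows "inj_on Min P" "Min ` P \<subseteq> U"
proof -
  have Min_in: "Min B \<in> B" if "B \<in> P" for B
    using partition_onD1[OF assms(2)] partition_onD3[OF assms(2)] that assms(1)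
    by (intro Min_in) (auto intro: finite_subset)
  show "inj_on Min P"
    using Min_in partition_onD2[OF assms(2)] by (intro inj_onI) (metis disjoint_def disjoint_iff)
  show "Min ` P \<subseteq> U" using Min_in partition_onD1[OF assms(2)] by auto
qed

lemma card_partition_on_le:
  fixes U :: "'a::linorder set"
  assumes "finite U" "partition_on U P"
  shows "card P \<le> card U"
  using partition_on_inj_on_Min[OF assms] card_mono[OF assms(1)] card_image by metis

fun block_seq_sum :: "(nat \<Rightarrow> 'a::comm_ring_1) \<Rightarrow> nat \<Rightarrow> 'b set \<Rightarrow> 'a" where
  "block_seq_sum b 0 U = (if U = {} then 1 else 0)"
| "block_seq_sum b (Suc k) U = (\<Sum>S\<in>Pow U. b (card S) * block_seq_sum b k (U - S))"

fun block_seq_sum_card :: "(nat \<Rightarrow> 'a::comm_ring_1) \<Rightarrow> nat \<Rightarrow> nat \<Rightarrow> 'a" where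
  "block_seq_sum_card b 0 n = (if n = 0 then 1 else 0)"
| "block_seq_sum_card b (Suc k) n = (\<Sum>i\<le>n. of_nat (n choose i) * b i * block_seq_sum_card b k (n - i))"

definition partition_sum :: "(nat \<Rightarrow> 'a::comm_ring_1) \<Rightarrow> nat \<Rightarrow> 'b set \<Rightarrow> 'a" where
  "partition_sum b k U = (\<Sum>P | partition_on U P \<and> card P = k. \<Prod>B\<in>P. b (card B))"

lemma block_seq_sum_eq_card:
  assumes "finite U"
  shows "block_seq_sum b k U = block_seq_sum_card b k (card U)"
  using assms
proof (induction k arbitrary: U)
  case 0 then show ?case by auto
next
  case (Suc k)
  have "block_seq_sum b (Suc k) U = (\<Sum>S\<in>Pow U. b (card S) * block_seq_sum_card b k (card U - card S))"
    using Suc by (auto intro!: sum.cong simp: card_Diff_subset finite_subset)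
  also have "\<dots> = (\<Sum>i\<le>card U. \<Sum>S | S \<in> Pow U \<and> card S = i.
                        b (card S) * block_seq_sum_card b k (card U - card S))"
    by (rule sum.group[symmetric]) (use Suc.prems in \<open>auto intro: card_mono\<close>)
  also have "\<dots> = (\<Sum>i\<le>card U. of_nat (card U choose i) * b i * block_seq_sum_card b k (card U - i))"
    using n_subsets[OF Suc.prems] by (intro sum.cong) auto
  finally show ?case by simp
qed

lemma bij_betw_remove_block:
  assumes "finite U"
  shows "bij_betw (\<lambda>(P, S). (S, P - {S}))
           (SIGMA P:{P. partition_on U P \<and> card P = Suc k}. P)
           (SIGMA S:Pow U - {{}}. {P. partition_on (U - S) P \<and> card P = k})"
proof -
  have "(S, P - {S}) \<in> (SIGMA S:Pow U - {{}}. {P. partition_on (U - S) P \<and> card P = k})"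
    if P: "partition_on U P" "card P = Suc k" "S \<in> P" for P S
    using partition_on_Diff_block[OF P(1,3)] finite_elements[OF assms P(1)]
      partition_onD1[OF P(1)] partition_onD3[OF P(1)] P(2,3) by auto
  moreover have "(insert S P, S) \<in> (SIGMA P:{P. partition_on U P \<and> card P = Suc k}. P)"
    if P: "partition_on (U - S) P" "card P = k" "S \<subseteq> U" "S \<noteq> {}" for P S
    using partition_on_insert_block[OF P(1,3,4)] finite_elements[OF _ P(1)] assms P(2) by auto
  ultimately show ?thesis
    by (intro bij_betw_byWitness[where f' = "\<lambda>(S, P). (insert S P, S)"])
      (use partition_on_insert_block in \<open>auto, fastforce\<close>)
qed

text \<open>\<open>block_seq_sum\<close> admits empty blocks; the hypothesis \<open>b 0 = 0\<close> discards them.\<close>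

lemma block_seq_sum_eq_partition_sum:
  assumes "finite U" "b 0 = 0"
  shows "block_seq_sum b k U = of_nat (fact k) * partition_sum b k U"
  using assms(1)
proof (induction k arbitrary: U)
  case 0
  have "partition_on U P \<and> card P = 0 \<longleftrightarrow> U = {} \<and> P = {}" for P
    using finite_elements[OF 0, of P] partition_onD1[of U P] by (auto simp: partition_on_empty)
  then show ?case by (simp add: partition_sum_def)
next
  case (Suc k)
  define X where "X = (SIGMA S:Pow U - {{}}. {P. partition_on (U - S) P \<and> card P = k})"
  define Y where "Y = (SIGMA P:{P. partition_on U P \<and> card P = Suc k}. P)"
  let ?w = "\<lambda>P. \<Prod>B\<in>P. b (card B)"
  have fin_parts: "finite {P. partition_on V P \<and> card P = j}" if "finite V" for V and j
    by (rule finite_subset[OF _ finitely_many_partition_on[OF that]]) auto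
  have "block_seq_sum b (Suc k) U
      = (\<Sum>S\<in>Pow U - {{}}. b (card S) * (of_nat (fact k) * partition_sum b k (U - S)))"
    using Suc assms(2) by (auto intro!: sum.mono_neutral_cong_right)
  also have "\<dots> = of_nat (fact k)
      * (\<Sum>S\<in>Pow U - {{}}. \<Sum>P | partition_on (U - S) P \<and> card P = k. b (card S) * ?w P)"
    by (simp add: partition_sum_def sum_distrib_left mult_ac)
  also have "\<dots> = of_nat (fact k) * (\<Sum>(S, P)\<in>X. b (card S) * ?w P)"
    unfolding X_def by (subst sum.Sigma) (use Suc.prems in \<open>auto simp: fin_parts\<close>)
  also have "(\<Sum>(S, P)\<in>X. b (card S) * ?w P) = (\<Sum>(P, S)\<in>Y. b (card S) * ?w (P - {S}))"
    using sum.reindex_bij_betw[OF bij_betw_remove_block[OF Suc.prems, of k],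
        of "\<lambda>(S, P). b (card S) * ?w P"]
    unfolding X_def Y_def by (simp add: case_prod_unfold)
  also have "\<dots> = (\<Sum>(P, S)\<in>Y. ?w P)"
    unfolding Y_def using finite_elements[OF Suc.prems]
    by (intro sum.cong) (auto simp: prod.remove)
  also have "\<dots> = (\<Sum>P | partition_on U P \<and> card P = Suc k. of_nat (Suc k) * ?w P)"
    unfolding Y_def using fin_parts[OF Suc.prems] finite_elements[OF Suc.prems]
    by (subst sum.Sigma[symmetric]) auto
  finally show ?case by (simp add: partition_sum_def sum_distrib_left algebra_simps)
qed

lemma K_algebra_map_of_nat:
  assumes "K_algebra_map \<phi>"
  shows "\<phi> (of_nat n) = of_nat n"
proof (induction n)
  case 0
  have "\<phi> 0 = \<phi> 0 + \<phi> 0" using assms unfolding K_algebra_map_def by (metis add_0)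
  then show ?case by simp
next
  case (Suc n) then show ?case using assms unfolding K_algebra_map_def by simp
qed

lemma K_algebra_map_inverse_fact_mult:
  fixes \<phi> :: "'k::field_char_0 \<Rightarrow> 'a::comm_ring_1"
  assumes "K_algebra_map \<phi>" "i \<le> n"
  shows "\<phi> (inverse (fact i)) * \<phi> (inverse (fact (n - i))) = of_nat (n choose i) * \<phi> (inverse (fact n))"
proof -
  have "inverse (fact i) * inverse (fact (n - i)) = (of_nat (n choose i) :: 'k) * inverse (fact n)"
    using binomial_fact[OF assms(2), where 'a='k] by (simp add: field_simps)
  then show ?thesis
    using assms(1) K_algebra_map_of_nat[OF assms(1)] unfolding K_algebra_map_def by metis
qed

lemma K_algebra_map_fact_inverse_fact:
  fixes \<phi> :: "'k::field_char_0 \<Rightarrow> 'a::comm_ring_1"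
  assumes "K_algebra_map \<phi>"
  shows "of_nat (fact k) * \<phi> (inverse (fact k)) = 1"
proof -
  have "\<phi> (fact k) * \<phi> (inverse (fact k)) = 1"
    using assms unfolding K_algebra_map_def by (metis fact_nonzero right_inverse)
  moreover have "\<phi> (fact k) = of_nat (fact k)"
    using K_algebra_map_of_nat[OF assms, of "fact k"] by (simp only: of_nat_fact)
  ultimately show ?thesis by simp
qed

lemma egf_power_nth:
  fixes \<phi> :: "'k::field_char_0 \<Rightarrow> 'a::comm_ring_1"
  assumes "K_algebra_map \<phi>"
  shows "(Abs_fps (\<lambda>n. b n * \<phi> (inverse (fact n))) ^ k) $ n = \<phi> (inverse (fact n)) * block_seq_sum_card b k n"
proof (induction k arbitrary: n)
  case 0
  then show ?case using assms unfolding K_algebra_map_def by simp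
next
  case (Suc k)
  let ?c = "\<lambda>n. \<phi> (inverse (fact n))"
  have "(Abs_fps (\<lambda>n. b n * ?c n) ^ Suc k) $ n
      = (\<Sum>i\<le>n. b i * ?c i * (?c (n - i) * block_seq_sum_card b k (n - i)))"
    by (simp add: fps_mult_nth Suc atLeast0AtMost)
  also have "\<dots> = (\<Sum>i\<le>n. (?c i * ?c (n - i)) * (b i * block_seq_sum_card b k (n - i)))"
    by (simp add: mult_ac)
  also have "\<dots> = (\<Sum>i\<le>n. (of_nat (n choose i) * ?c n) * (b i * block_seq_sum_card b k (n - i)))"
    by (intro sum.cong refl) (simp add: K_algebra_map_inverse_fact_mult[OF assms])
  finally show ?case by (simp add: sum_distrib_left mult_ac)
qed

lemma fps_compose_egf_nth:
  fixes \<phi> :: "'k::field_char_0 \<Rightarrow> 'a::comm_ring_1"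
  assumes "K_algebra_map \<phi>" "a 0 = 0" "b 0 = 0"
  shows "(Abs_fps (\<lambda>n. a n * \<phi> (inverse (fact n))) oo Abs_fps (\<lambda>n. b n * \<phi> (inverse (fact n)))) $ n
     = \<phi> (inverse (fact n)) * (\<Sum>P | partition_on {1..n} P. a (card P) * (\<Prod>B\<in>P. b (card B)))"
proof -
  let ?c = "\<lambda>n. \<phi> (inverse (fact n))"
  let ?U = "{1..n}"
  have "(Abs_fps (\<lambda>n. a n * ?c n) oo Abs_fps (\<lambda>n. b n * ?c n)) $ n
      = (\<Sum>k\<le>n. a k * ?c k * (?c n * (of_nat (fact k) * partition_sum b k ?U)))"
    using block_seq_sum_eq_card[of ?U b] block_seq_sum_eq_partition_sum[of ?U b] assms(3)
    by (simp add: fps_compose_nth egf_power_nth[OF assms(1)] atLeast0AtMost)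
  also have "\<dots> = (\<Sum>k\<le>n. (of_nat (fact k) * ?c k) * (?c n * (a k * partition_sum b k ?U)))"
    by (simp add: mult_ac)
  also have "\<dots> = ?c n * (\<Sum>k\<le>n. a k * partition_sum b k ?U)"
    by (simp add: sum_distrib_left K_algebra_map_fact_inverse_fact[OF assms(1)])
  also have "(\<Sum>k\<le>n. a k * partition_sum b k ?U)
     = (\<Sum>k\<le>n. \<Sum>P | P \<in> {P. partition_on ?U P} \<and> card P = k. a (card P) * (\<Prod>B\<in>P. b (card B)))"
    by (simp add: partition_sum_def sum_distrib_left)
  also have "\<dots> = (\<Sum>P | partition_on ?U P. a (card P) * (\<Prod>B\<in>P. b (card B)))"
    by (rule sum.group) (use finitely_many_partition_on[of ?U] card_partition_on_le[of ?U] in auto)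
  finally show ?thesis .
qed

lemma egf_eq_Abs_fps:
  assumes "K_algebra_map \<phi>" "wcard M val 1 = 1"
  shows "egf \<phi> M val = Abs_fps (\<lambda>n. (if n = 0 then 0 else wcard M val n) * \<phi> (inverse (fact n)))"
  using assms by (intro fps_ext) (simp add: egf_def K_algebra_map_def)

lemma sum_partition_on_positive_sizes:
  assumes "finite U" "U \<noteq> {}"
  shows "(\<Sum>P | partition_on U P. (if card P = 0 then 0 else a (card P))
                                   * (\<Prod>B\<in>P. if card B = 0 then 0 else b (card B)))
       = (\<Sum>P | partition_on U P. a (card P) * (\<Prod>B\<in>P. b (card B)))"
proof (intro sum.cong refl)
  fix P assume "P \<in> {P. partition_on U P}"
  then have P: "partition_on U P" by simp
  have "card P \<noteq> 0" using finite_elements[OF assms(1) P] partition_onD1[OF P] assms(2) by auto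
  moreover have block_nonempty: "card B \<noteq> 0" if "B \<in> P" for B
    using partition_onD1[OF P] partition_onD3[OF P] that assms(1)
    by (metis Union_upper card_0_eq finite_subset)
  ultimately show "(if card P = 0 then 0 else a (card P)) * (\<Prod>B\<in>P. if card B = 0 then 0 else b (card B))
      = a (card P) * (\<Prod>B\<in>P. b (card B))"
    by (simp add: block_nonempty)
qed

context set_operad
begin

lemma otype_transport:
  assumes "finite U" "bij_betw \<sigma> U W" "s \<in> M U"
  shows "otype rl W (rl \<sigma> s) = otype rl U s"
proof
  show "otype rl W (rl \<sigma> s) \<subseteq> otype rl U s"
  proof
    fix x assume "x \<in> otype rl W (rl \<sigma> s)"
    then obtain V \<tau> where x: "x = (V, rl \<tau> (rl \<sigma> s))" "finite V" "bij_betw \<tau> W V"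
      unfolding otype_def by auto
    have "rl \<tau> (rl \<sigma> s) = rl (\<tau> \<circ> \<sigma>) s" using rl_comp[OF assms(1,2) x(3) assms(3)] by simp
    moreover have "bij_betw (\<tau> \<circ> \<sigma>) U V" using assms(2) x(3) by (rule bij_betw_trans)
    ultimately show "x \<in> otype rl U s" using x unfolding otype_def by auto
  qed
next
  show "otype rl U s \<subseteq> otype rl W (rl \<sigma> s)"
  proof
    fix x assume "x \<in> otype rl U s"
    then obtain V \<tau> where x: "x = (V, rl \<tau> s)" "finite V" "bij_betw \<tau> U V"
      unfolding otype_def by auto
    define \<tau>' where "\<tau>' = \<tau> \<circ> inv_into U \<sigma>"
    have \<tau>': "bij_betw \<tau>' W V"
      unfolding \<tau>'_def using bij_betw_trans[OF bij_betw_inv_into[OF assms(2)] x(3)] .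
    have "rl \<tau>' (rl \<sigma> s) = rl (\<tau>' \<circ> \<sigma>) s" using rl_comp[OF assms(1,2) \<tau>' assms(3)] by simp
    also have "\<dots> = rl \<tau> s"
      using assms(2) by (intro rl_local[OF assms(3)]) (auto simp: \<tau>'_def bij_betw_def)
    finally show "x \<in> otype rl W (rl \<sigma> s)" using x \<tau>' unfolding otype_def by force
  qed
qed

lemma bij_betw_rl:
  assumes "finite U" "bij_betw \<sigma> U V"
  shows "bij_betw (rl \<sigma>) (M U) (M V)"
proof (rule bij_betw_byWitness[where f' = "rl (inv_into U \<sigma>)"])
  have \<sigma>': "bij_betw (inv_into U \<sigma>) V U" using bij_betw_inv_into[OF assms(2)] .
  have "finite V" using bij_betw_finite[OF assms(2)] assms(1) by simp
  show "\<forall>m\<in>M U. rl (inv_into U \<sigma>) (rl \<sigma> m) = m"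
  proof
    fix m assume m: "m \<in> M U"
    have "rl (inv_into U \<sigma>) (rl \<sigma> m) = rl (inv_into U \<sigma> \<circ> \<sigma>) m"
      using rl_comp[OF assms \<sigma>' m] by simp
    also have "\<dots> = rl id m" using assms(2) by (intro rl_local[OF m]) (auto simp: bij_betw_def)
    finally show "rl (inv_into U \<sigma>) (rl \<sigma> m) = m" using rl_id[OF m] by simp
  qed
  show "\<forall>m\<in>M V. rl \<sigma> (rl (inv_into U \<sigma>) m) = m"
  proof
    fix m assume m: "m \<in> M V"
    have "rl \<sigma> (rl (inv_into U \<sigma>) m) = rl (\<sigma> \<circ> inv_into U \<sigma>) m"
      using rl_comp[OF \<open>finite V\<close> \<sigma>' assms(2) m] by simp
    also have "\<dots> = rl id m"
      using assms(2) by (intro rl_local[OF m]) (auto simp: bij_betw_def f_inv_into_f)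
    finally show "rl \<sigma> (rl (inv_into U \<sigma>) m) = m" using rl_id[OF m] by simp
  qed
  show "rl \<sigma> ` M U \<subseteq> M V" using rl_closed[OF assms] by auto
  show "rl (inv_into U \<sigma>) ` M V \<subseteq> M U" using rl_closed[OF \<open>finite V\<close> \<sigma>'] by auto
qed

lemma sum_otype_eq_wcard:
  assumes "finite U"
  shows "(\<Sum>m\<in>M U. \<omega> (otype rl U m)) = wcard M (\<lambda>U m. \<omega> (otype rl U m)) (card U)"
proof -
  obtain \<sigma> where \<sigma>: "bij_betw \<sigma> U {1..card U}"
    using finite_same_card_bij[OF assms, of "{1..card U}"] by auto
  have "(\<Sum>m\<in>M U. \<omega> (otype rl U m)) = (\<Sum>m\<in>M U. \<omega> (otype rl {1..card U} (rl \<sigma> m)))"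
    using otype_transport[OF assms \<sigma>] by simp
  also have "\<dots> = (\<Sum>m\<in>M {1..card U}. \<omega> (otype rl {1..card U} m))"
    by (rule sum.reindex_bij_betw[OF bij_betw_rl[OF assms \<sigma>]])
  finally show ?thesis by (simp add: wcard_def)
qed

lemma weight_wcard_one:
  assumes "weight rl e \<omega>"
  shows "wcard M (\<lambda>U m. \<omega> (otype rl U m)) 1 = 1"
  using assms M_singleton[of 1] by (simp add: wcard_def weight_def)

lemma comp_structs_eq_Sigma:
  "comp_structs M U = (SIGMA P:{P. partition_on U P}. PiE P M \<times> M (Min ` P))"
  unfolding comp_structs_def PiE_def extensional_def by auto

lemma finite_structures_over_partition:
  assumes "finite U" "partition_on U P"
  shows "finite (PiE P M \<times> M (Min ` P))"
  using finite_elements[OF assms] partition_onD1[OF assms(2)] assms(1)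
  by (intro finite_cartesian_product finite_PiE finite_M) (auto intro: finite_subset)

lemma finite_comp_structs:
  assumes "finite U"
  shows "finite (comp_structs M U)"
  unfolding comp_structs_eq_Sigma using finitely_many_partition_on[OF assms]
    finite_structures_over_partition[OF assms] by auto

lemma sum_structures_over_partition:
  assumes "finite U" "partition_on U P"
  shows "(\<Sum>(f, m')\<in>PiE P M \<times> M (Min ` P). (\<Prod>B\<in>P. \<omega>2 (otype rl B (f B))) * \<omega>1 (otype rl (Min ` P) m'))
    = wcard M (\<lambda>U m. \<omega>1 (otype rl U m)) (card P)
      * (\<Prod>B\<in>P. wcard M (\<lambda>U m. \<omega>2 (otype rl U m)) (card B))"
proof -
  have fin_P: "finite P" using finite_elements[OF assms] .
  have fin_B: "finite B" if "B \<in> P" for B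
    using partition_onD1[OF assms(2)] assms(1) that by (auto intro: finite_subset)
  have "(\<Sum>(f, m')\<in>PiE P M \<times> M (Min ` P). (\<Prod>B\<in>P. \<omega>2 (otype rl B (f B))) * \<omega>1 (otype rl (Min ` P) m'))
      = (\<Sum>f\<in>PiE P M. \<Prod>B\<in>P. \<omega>2 (otype rl B (f B)))
        * (\<Sum>m'\<in>M (Min ` P). \<omega>1 (otype rl (Min ` P) m'))"
    by (simp add: sum.cartesian_product[symmetric] sum_product)
  also have "(\<Sum>f\<in>PiE P M. \<Prod>B\<in>P. \<omega>2 (otype rl B (f B))) = (\<Prod>B\<in>P. \<Sum>m\<in>M B. \<omega>2 (otype rl B m))"
    using fin_P fin_B finite_M by (intro prod_sum_PiE[symmetric]) auto
  also have "\<dots> = (\<Prod>B\<in>P. wcard M (\<lambda>U m. \<omega>2 (otype rl U m)) (card B))"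
    using fin_B sum_otype_eq_wcard by (intro prod.cong) auto
  also have "(\<Sum>m'\<in>M (Min ` P). \<omega>1 (otype rl (Min ` P) m')) = wcard M (\<lambda>U m. \<omega>1 (otype rl U m)) (card P)"
    using sum_otype_eq_wcard[of "Min ` P" \<omega>1] fin_P card_image[OF partition_on_inj_on_Min(1)[OF assms]]
    by simp
  finally show ?thesis by (simp add: mult.commute)
qed

lemma sum_conv_val:
  assumes "finite U"
  shows "(\<Sum>m\<in>M U. conv_val M rl eta \<omega>2 \<omega>1 U m)
    = (\<Sum>P | partition_on U P. wcard M (\<lambda>U m. \<omega>1 (otype rl U m)) (card P)
                               * (\<Prod>B\<in>P. wcard M (\<lambda>U m. \<omega>2 (otype rl U m)) (card B)))"
proof -
  define w where "w = (\<lambda>(P, f, m'). (\<Prod>B\<in>P. \<omega>2 (otype rl B (f B))) * \<omega>1 (otype rl (Min ` P) m'))"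
  define g where "g = (\<lambda>(P :: nat set set, f :: nat set \<Rightarrow> 's, m' :: 's). eta P f m')"
  have "(\<Sum>m\<in>M U. conv_val M rl eta \<omega>2 \<omega>1 U m)
      = (\<Sum>m\<in>M U. \<Sum>x | x \<in> comp_structs M U \<and> g x = m. w x)"
    unfolding conv_val_def w_def g_def by (intro sum.cong refl arg_cong2[where f = sum]) auto
  also have "\<dots> = (\<Sum>x\<in>comp_structs M U. w x)"
    using finite_comp_structs[OF assms] finite_M[OF assms] eta_closed[OF assms]
    by (intro sum.group) (auto simp: g_def)
  also have "\<dots> = (\<Sum>P | partition_on U P. \<Sum>(f, m')\<in>PiE P M \<times> M (Min ` P). w (P, f, m'))"
    using finitely_many_partition_on[OF assms] finite_structures_over_partition[OF assms]
    unfolding comp_structs_eq_Sigma by (subst sum.Sigma) (auto simp: case_prod_unfold)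
  also have "\<dots> = (\<Sum>P | partition_on U P. wcard M (\<lambda>U m. \<omega>1 (otype rl U m)) (card P)
                               * (\<Prod>B\<in>P. wcard M (\<lambda>U m. \<omega>2 (otype rl U m)) (card B)))"
    using sum_structures_over_partition[OF assms] by (intro sum.cong) (auto simp: w_def)
  finally show ?thesis .
qed

end

theorem mainTheorem3:
  fixes M :: "nat set \<Rightarrow> 's set"
    and rl :: "(nat \<Rightarrow> nat) \<Rightarrow> 's \<Rightarrow> 's"
    and eta :: "nat set set \<Rightarrow> (nat set \<Rightarrow> 's) \<Rightarrow> 's \<Rightarrow> 's"
    and e :: "nat \<Rightarrow> 's"
    and \<phi> :: "'k::field_char_0 \<Rightarrow> 'a::comm_ring_1"
    and \<omega>1 \<omega>2 :: "(nat set \<times> 's) set \<Rightarrow> 'a"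
  assumes "set_operad M rl eta e"
    and "K_algebra_map \<phi>"
    and "weight rl e \<omega>1"
    and "weight rl e \<omega>2"
  shows "egf \<phi> M (\<lambda>U m. \<omega>1 (otype rl U m)) oo egf \<phi> M (\<lambda>U m. \<omega>2 (otype rl U m))
         = egf \<phi> M (conv_val M rl eta \<omega>2 \<omega>1)"
proof -
  interpret set_operad M rl eta e by fact
  let ?W1 = "wcard M (\<lambda>U m. \<omega>1 (otype rl U m))" and ?W2 = "wcard M (\<lambda>U m. \<omega>2 (otype rl U m))"
  let ?W12 = "wcard M (conv_val M rl eta \<omega>2 \<omega>1)"
  let ?egf = "\<lambda>W. Abs_fps (\<lambda>n. (if n = 0 then 0 else W n) * \<phi> (inverse (fact n)))"
  have conv: "?W12 n = (\<Sum>P | partition_on {1..n} P. ?W1 (card P) * (\<Prod>B\<in>P. ?W2 (card B)))" for n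
    unfolding wcard_def[of M "conv_val M rl eta \<omega>2 \<omega>1"] by (rule sum_conv_val) simp
  have W1: "?W1 1 = 1" and W2: "?W2 1 = 1" using weight_wcard_one assms(3,4) by blast+
  then have W12: "?W12 1 = 1" by (simp add: conv partition_on_singleton_iff)
  have "(?egf ?W1 oo ?egf ?W2) $ n = ?egf ?W12 $ n" for n
    using fps_compose_egf_nth[OF assms(2), of "\<lambda>n. if n = 0 then 0 else ?W1 n"
        "\<lambda>n. if n = 0 then 0 else ?W2 n" n]
    by (cases "n = 0")
      (simp_all add: conv sum_partition_on_positive_sizes partition_on_empty mult.commute)
  then show ?thesis
    unfolding egf_eq_Abs_fps[OF assms(2) W1] egf_eq_Abs_fps[OF assms(2) W2]
      egf_eq_Abs_fps[OF assms(2) W12]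
    by (rule fps_ext)
qed

end
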